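(* Let $N \ge 1$ and let $W_N$ be the set of binary words of length $N$. Define $\varphi_3 : W_N \to W_N$ by $\varphi_3(u) = v\, 0 11\, 0^{p-1} v'$ if $u = v 0^p 11 v'$ where $p \geq 2$, $v'$ is a (possibly empty) word, and $v$ is a (possibly empty) word which does not contain $0011$ as a contiguous subword and which is either empty or ends with the letter $1$; and $\varphi_3(u) = u$ otherwise. Then $|P(\varphi_3(u))| \leq |P(u)|$ for every $u \in W_N$.
   Context: For a binary word $x$, $x^j$ denotes $j$ concatenated copies of $x$, and juxtaposition denotes concatenation. For a binary word $w = w_1 \cdots w_\ell$ of length $\ell$, $P(w)$ is the set of indices $i \geq 2$ such that at least one of the following holds: (i) $\ell \geq i$ and $w_{i-1} w_i = 00$; (ii) $\ell \geq i+2$ and $w_{i-1} w_i w_{i+1} w_{i+2} = 0100$; (iii) $\ell \geq i+3$ and $w_{i-1} \cdots w_{i+3} = 01010$. *)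

theory Defs
  imports Main
begin

text \<open>Binary words are lists over {0,1} (as naturals). Positions are 1-indexed in the
paper: w_i is w ! (i - 1).\<close>

definition binword :: "nat \<Rightarrow> nat list set" where
  "binword N = {w. length w = N \<and> set w \<subseteq> {0, 1}}"

definition letter :: "nat list \<Rightarrow> nat \<Rightarrow> nat" where
  "letter w i = w ! (i - 1)"

definition Pset :: "nat list \<Rightarrow> nat set" where
  "Pset w = {i. 2 \<le> i \<and>
     ((length w \<ge> i \<and> letter w (i-1) = 0 \<and> letter w i = 0)
    \<or> (length w \<ge> i + 2 \<and> letter w (i-1) = 0 \<and> letter w i = 1
          \<and> letter w (i+1) = 0 \<and> letter w (i+2) = 0)
    \<or> (length w \<ge> i + 3 \<and> letter w (i-1) = 0 \<and> letter w i = 1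
          \<and> letter w (i+1) = 0 \<and> letter w (i+2) = 1 \<and> letter w (i+3) = 0))}"

definition contains_factor :: "nat list \<Rightarrow> nat list \<Rightarrow> bool" where
  "contains_factor x v \<longleftrightarrow> (\<exists>a b. v = a @ x @ b)"

definition phi3_dec :: "nat list \<Rightarrow> nat list \<Rightarrow> nat \<Rightarrow> nat list \<Rightarrow> bool" where
  "phi3_dec u v p v' \<longleftrightarrow>
     u = v @ replicate p 0 @ [1, 1] @ v' \<and> p \<ge> 2 \<and>
     \<not> contains_factor [0, 0, 1, 1] v \<and> (v = [] \<or> last v = 1)"

definition phi3 :: "nat list \<Rightarrow> nat list" where
  "phi3 u = (if \<exists>v p v'. phi3_dec u v p v'
     then (case (SOME (v, p, v'). phi3_dec u v p v') of
             (v, p, v') \<Rightarrow> v @ [0, 1, 1] @ replicate (p - 1) 0 @ v')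
     else u)"

end

theory Submission
  imports Defs
begin

text \<open>Shift indices so that i \<in> P(w) corresponds to the 0-based position i - 2, where one of the
patterns 00, 0100, 01010 starts. Writing u = v 0^p 11 v' and phi3(u) = v 011 0^(p-1) v', the
map sending a pattern start k of phi3(u) inside the block 011 0^(p-1) to k - 3, and fixing all
other starts, injects the pattern starts of phi3(u) into those of u: no pattern starts on the
letters 011, a start in the zeros 0^(p-1) is followed in u by at least two zeros, and since v
ends in 1 and no pattern contains 11 or ends in 101, a pattern starting in v overlaps 011 at most
in its first letter 0, which also follows v in u.\<close>

definition starts_P_pattern :: "nat list \<Rightarrow> bool" where
  "starts_P_pattern s \<longleftrightarrow>
     (\<exists>r. s = 0#0#r) \<or> (\<exists>r. s = 0#1#0#0#r) \<or> (\<exists>r. s = 0#1#0#1#0#r)"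

definition Pset0 :: "nat list \<Rightarrow> nat set" where
  "Pset0 w = {k. starts_P_pattern (drop k w)}"

lemma drop_eq_Cons_iff:
  "drop k w = x # r \<longleftrightarrow> k < length w \<and> w ! k = x \<and> drop (Suc k) w = r"
  by (metis Cons_nth_drop_Suc drop_all list.inject list.simps(3) not_le_imp_less)

lemma starts_P_pattern_drop_iff:
  "starts_P_pattern (drop k w) \<longleftrightarrow>
     (k + 2 \<le> length w \<and> w!k = 0 \<and> w!(k+1) = 0)
   \<or> (k + 4 \<le> length w \<and> w!k = 0 \<and> w!(k+1) = 1 \<and> w!(k+2) = 0 \<and> w!(k+3) = 0)
   \<or> (k + 5 \<le> length w \<and> w!k = 0 \<and> w!(k+1) = 1 \<and> w!(k+2) = 0 \<and> w!(k+3) = 1 \<and> w!(k+4) = 0)"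
  unfolding starts_P_pattern_def drop_eq_Cons_iff
  by (simp add: Suc_le_eq numeral_eq_Suc) (meson Suc_lessD)

lemma Pset_eq_image_Pset0: "Pset w = (\<lambda>k. k + 2) ` Pset0 w"
proof -
  have shifted: "k + 2 \<in> Pset w \<longleftrightarrow> k \<in> Pset0 w" for k
    unfolding Pset_def Pset0_def starts_P_pattern_drop_iff letter_def
    by (simp add: numeral_eq_Suc)
  have "i \<in> Pset w \<longleftrightarrow> i \<in> (\<lambda>k. k + 2) ` Pset0 w" for i
  proof (cases "2 \<le> i")
    case True
    then obtain k where "i = k + 2" by (metis le_add_diff_inverse2)
    then show ?thesis using shifted by auto
  qed (auto simp: Pset_def)
  then show ?thesis by blast
qed

lemma card_Pset_eq_card_Pset0: "card (Pset w) = card (Pset0 w)"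
  unfolding Pset_eq_image_Pset0 by (rule card_image) (simp add: inj_on_def)

lemma Pset0_subset_lessThan: "Pset0 w \<subseteq> {..<length w}"
  by (auto simp: Pset0_def starts_P_pattern_drop_iff)

lemma finite_Pset0: "finite (Pset0 w)"
  using Pset0_subset_lessThan finite_subset by blast

lemma starts_P_pattern_append_long:
  assumes "length s \<ge> 5"
  shows "starts_P_pattern (s @ x) = starts_P_pattern (s @ y)"
proof -
  obtain x1 x2 x3 x4 x5 r where "s = x1#x2#x3#x4#x5#r"
    using assms by (auto simp: Suc_le_length_iff numeral_eq_Suc)
  then show ?thesis by (simp add: starts_P_pattern_def)
qed

lemma starts_P_pattern_011_imp_00:
  assumes "s \<noteq> []" and "last s = 1" and "starts_P_pattern (s @ 0#1#1#t)"
  shows "starts_P_pattern (s @ 0#0#t')"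
proof (cases "length s \<ge> 5")
  case True
  then show ?thesis using assms(3) starts_P_pattern_append_long by metis
next
  case False
  moreover have "0 < length s" using assms(1) by simp
  ultimately have "length s = 1 \<or> length s = 2 \<or> length s = 3 \<or> length s = 4" by linarith
  then show ?thesis
    using assms by (auto simp: starts_P_pattern_def length_Suc_conv numeral_eq_Suc)
qed

lemma Pset0_prefix_011_imp_00:
  assumes "k < length v" and "last v = 1"
    and "k \<in> Pset0 (v @ 0#1#1#t)"
  shows "k \<in> Pset0 (v @ 0#0#t')"
proof -
  have "drop k v \<noteq> []" and "last (drop k v) = 1" using assms(1,2) by auto
  with assms(1,3) show ?thesis
    using starts_P_pattern_011_imp_00 by (simp add: Pset0_def)
qed

lemma Pset0_not_at_011:
  assumes "k \<in> Pset0 (v @ [0,1,1] @ t)" and "length v \<le> k" and "k < length v + 3"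
  shows False
proof -
  have "k = length v \<or> k = length v + 1 \<or> k = length v + 2" using assms(2,3) by linarith
  then show False using assms(1) by (auto simp: Pset0_def starts_P_pattern_def)
qed

lemma Pset0_in_zero_block:
  assumes "m + 2 \<le> p"
  shows "length v + m \<in> Pset0 (v @ replicate p 0 @ t)"
proof -
  have "drop (length v + m) (v @ replicate p 0 @ t) = 0 # 0 # replicate (p - m - 2) 0 @ t"
    using assms by (simp add: numeral_eq_Suc Suc_diff_Suc flip: replicate_Suc)
  then show ?thesis
    by (simp add: Pset0_def starts_P_pattern_def)
qed

lemma card_Pset0_shift_block_le:
  assumes "p \<ge> 2" and "v = [] \<or> last v = 1"
  shows "card (Pset0 (v @ [0,1,1] @ replicate (p - 1) 0 @ v'))
       \<le> card (Pset0 (v @ replicate p 0 @ [1,1] @ v'))"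
    (is "card (Pset0 ?w) \<le> card (Pset0 ?u)")
proof -
  define a where "a = length v"
  define f where "f k = (if a \<le> k \<and> k < a + p + 2 then k - 3 else k)" for k
  have block_start: "a + 3 \<le> k" if "k \<in> Pset0 ?w" "a \<le> k" for k
    using Pset0_not_at_011[of k v] that by (force simp: a_def)
  have maps_into: "f k \<in> Pset0 ?u" if k: "k \<in> Pset0 ?w" for k
  proof -
    consider (prefix) "k < a" | (block) "a \<le> k" "k < a + p + 2" | (suffix) "a + p + 2 \<le> k"
      by linarith
    then show ?thesis
    proof cases
      case prefix
      then have "v \<noteq> []" by (auto simp: a_def)
      moreover obtain q where "p = Suc (Suc q)" using assms(1) by (metis add_2_eq_Suc le_Suc_ex)
      ultimately show ?thesis
        using k prefix assms(2) Pset0_prefix_011_imp_00[of k v "replicate (p - 1) 0 @ v'"]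
        by (simp add: f_def a_def)
    next
      case block
      with block_start[OF k] have "k - 3 = a + (k - 3 - a)" "(k - 3 - a) + 2 \<le> p" by linarith+
      then show ?thesis
        using block Pset0_in_zero_block[of "k - 3 - a" p v "[1,1] @ v'"]
        by (simp add: f_def a_def)
    next
      case suffix
      have "?u = (v @ replicate p 0 @ [1,1]) @ v'" "?w = (v @ [0,1,1] @ replicate (p - 1) 0) @ v'"
        by simp_all
      then have "drop k ?u = drop k ?w"
        using suffix assms(1) by (simp only: drop_append) (simp add: a_def)
      then show ?thesis using k suffix by (simp add: f_def Pset0_def)
    qed
  qed
  have "inj_on f (Pset0 ?w)"
  proof (rule inj_onI)
    fix x y assume "x \<in> Pset0 ?w" "y \<in> Pset0 ?w" "f x = f y"
    with block_start[of x] block_start[of y] show "x = y" by (auto simp: f_def split: if_splits)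
  qed
  then show ?thesis using card_inj_on_le[OF _ _ finite_Pset0] maps_into by blast
qed

lemma phi3_cases:
  obtains "phi3 u = u"
  | v p v' where "phi3_dec u v p v'" and "phi3 u = v @ [0,1,1] @ replicate (p - 1) 0 @ v'"
proof (cases "\<exists>v p v'. phi3_dec u v p v'")
  case True
  then have "\<exists>x. case x of (v, p, v') \<Rightarrow> phi3_dec u v p v'" by auto
  from someI_ex[OF this] obtain v p v'
    where "(SOME x. case x of (v, p, v') \<Rightarrow> phi3_dec u v p v') = (v, p, v')"
      and "phi3_dec u v p v'"
    by (metis (mono_tags, lifting) case_prodE)
  with True that(2) show ?thesis by (simp add: phi3_def)
next
  case False
  with that(1) show ?thesis by (simp add: phi3_def)
qed

theorem lemma4p3:
  fixes N :: nat and u :: "nat list"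
  assumes "N \<ge> 1" and "u \<in> binword N"
  shows "card (Pset (phi3 u)) \<le> card (Pset u)"
proof (cases u rule: phi3_cases)
  case (2 v p v')
  then show ?thesis
    using card_Pset0_shift_block_le[of p v v']
    by (simp add: card_Pset_eq_card_Pset0 phi3_dec_def)
qed simp

end
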